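(* For all integers $n,k$ with $1\le k\le n-1$, $\Gamma_{\times k,t}(K_n\times K_2)=2k+2$.
   Context: For an integer $k\ge1$ and a graph $G$ with $\delta(G)\ge k$, a set $S\subseteq V(G)$ is a $k$-tuple total dominating set ($k$TDS) if $|N_G(x)\cap S|\ge k$ for every $x\in V(G)$, and $\Gamma_{\times k,t}(G)$ is the maximum cardinality of a minimal (with respect to inclusion) $k$TDS of $G$. The cross (direct) product $G\times H$ has vertex set $V(G)\times V(H)$, with $(g_1,h_1)\sim(g_2,h_2)$ iff $g_1g_2\in E(G)$ and $h_1h_2\in E(H)$. *)

theory Defs
  imports Main
begin

text \<open>A finite simple graph is represented by a vertex set V and a symmetric,
irreflexive adjacency predicate E on V.\<close>

definition open_nbhd :: "'a set \<Rightarrow> ('a \<Rightarrow> 'a \<Rightarrow> bool) \<Rightarrow> 'a \<Rightarrow> 'a set" where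
  "open_nbhd V E x = {y \<in> V. E x y}"

definition is_kTDS :: "nat \<Rightarrow> 'a set \<Rightarrow> ('a \<Rightarrow> 'a \<Rightarrow> bool) \<Rightarrow> 'a set \<Rightarrow> bool" where
  "is_kTDS k V E S \<longleftrightarrow> S \<subseteq> V \<and> (\<forall>x\<in>V. card (open_nbhd V E x \<inter> S) \<ge> k)"

definition is_minimal_kTDS :: "nat \<Rightarrow> 'a set \<Rightarrow> ('a \<Rightarrow> 'a \<Rightarrow> bool) \<Rightarrow> 'a set \<Rightarrow> bool" where
  "is_minimal_kTDS k V E S \<longleftrightarrow> is_kTDS k V E S \<and> (\<forall>T. T \<subset> S \<longrightarrow> \<not> is_kTDS k V E T)"

definition upper_ktuple_tdom :: "nat \<Rightarrow> 'a set \<Rightarrow> ('a \<Rightarrow> 'a \<Rightarrow> bool) \<Rightarrow> nat" where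
  "upper_ktuple_tdom k V E = Max {card S | S. is_minimal_kTDS k V E S}"

definition K_verts :: "nat \<Rightarrow> nat set" where "K_verts n = {0..<n}"
definition K_adj :: "nat \<Rightarrow> nat \<Rightarrow> bool" where "K_adj a b \<longleftrightarrow> a \<noteq> b"

definition cross_verts :: "'a set \<Rightarrow> 'b set \<Rightarrow> ('a \<times> 'b) set" where
  "cross_verts V W = V \<times> W"
definition cross_adj :: "('a \<Rightarrow> 'a \<Rightarrow> bool) \<Rightarrow> ('b \<Rightarrow> 'b \<Rightarrow> bool) \<Rightarrow> 'a \<times> 'b \<Rightarrow> 'a \<times> 'b \<Rightarrow> bool" where
  "cross_adj E F p q \<longleftrightarrow> E (fst p) (fst q) \<and> F (snd p) (snd q)"

end

theory Submission
  imports Defs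
begin

text \<open>In \<open>G \<times> K\<^sub>2\<close> the neighbours of \<open>(v, b)\<close> are exactly the pairs \<open>(u, 1 - b)\<close> with \<open>u\<close>
a neighbour of \<open>v\<close> in \<open>G\<close>. Hence a set \<open>S\<close> is a (minimal) \<open>k\<close>TDS of \<open>G \<times> K\<^sub>2\<close> iff both of
its layers \<open>{v. (v, b) \<in> S}\<close> are (minimal) \<open>k\<close>TDSs of \<open>G\<close>. In \<open>K\<^sub>n\<close> every vertex misses at
most one element of a set \<open>X\<close>, so \<open>X\<close> is a \<open>k\<close>TDS iff \<open>|X| \<ge> k + 1\<close>, and the minimal ones have
exactly \<open>k + 1\<close> elements. Thus every minimal \<open>k\<close>TDS of \<open>K\<^sub>n \<times> K\<^sub>2\<close> has \<open>2k + 2\<close> elements,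
and \<open>{0..k} \<times> {0, 1}\<close> is one as soon as \<open>k + 1 \<le> n\<close>.\<close>

definition layer :: "('a \<times> nat) set \<Rightarrow> nat \<Rightarrow> 'a set" where
  "layer S b = {v. (v, b) \<in> S}"

lemma layer_subset: "S \<subseteq> V \<times> {0..<2} \<Longrightarrow> layer S b \<subseteq> V"
  unfolding layer_def by auto

lemma open_nbhd_cross_K2_Int:
  assumes "S \<subseteq> V \<times> {0..<2}" and "b < 2"
  shows "open_nbhd (V \<times> {0..<2}) (cross_adj E K_adj) (v, b) \<inter> S
           = (\<lambda>u. (u, 1 - b)) ` (open_nbhd V E v \<inter> layer S (1 - b))"
proof (intro equalityI subsetI)
  fix x assume x: "x \<in> open_nbhd (V \<times> {0..<2}) (cross_adj E K_adj) (v, b) \<inter> S"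
  obtain u c where xuc: "x = (u, c)" by fastforce
  with x assms(2) have "c = 1 - b"
    unfolding open_nbhd_def cross_adj_def K_adj_def by auto
  with x xuc show "x \<in> (\<lambda>u. (u, 1 - b)) ` (open_nbhd V E v \<inter> layer S (1 - b))"
    unfolding open_nbhd_def cross_adj_def K_adj_def layer_def by auto
next
  fix x assume "x \<in> (\<lambda>u. (u, 1 - b)) ` (open_nbhd V E v \<inter> layer S (1 - b))"
  moreover have "1 - b \<noteq> b" "1 - b < 2" using assms(2) by arith+
  ultimately show "x \<in> open_nbhd (V \<times> {0..<2}) (cross_adj E K_adj) (v, b) \<inter> S"
    unfolding open_nbhd_def cross_adj_def K_adj_def layer_def by auto
qed

lemma card_open_nbhd_cross_K2_Int:
  assumes "S \<subseteq> V \<times> {0..<2}" and "b < 2"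
  shows "card (open_nbhd (V \<times> {0..<2}) (cross_adj E K_adj) (v, b) \<inter> S)
           = card (open_nbhd V E v \<inter> layer S (1 - b))"
  unfolding open_nbhd_cross_K2_Int[OF assms] by (simp add: card_image inj_on_def)

lemma is_kTDS_cross_K2_iff:
  assumes "S \<subseteq> V \<times> {0..<2}"
  shows "is_kTDS k (V \<times> {0..<2}) (cross_adj E K_adj) S \<longleftrightarrow> (\<forall>b<2. is_kTDS k V E (layer S b))"
proof -
  have "(\<forall>x\<in>V \<times> {0..<2}. k \<le> card (open_nbhd (V \<times> {0..<2}) (cross_adj E K_adj) x \<inter> S))
          \<longleftrightarrow> (\<forall>b<2. \<forall>v\<in>V. k \<le> card (open_nbhd V E v \<inter> layer S (1 - b)))"
    using card_open_nbhd_cross_K2_Int[OF assms] by auto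
  also have "\<dots> \<longleftrightarrow> (\<forall>b<2. \<forall>v\<in>V. k \<le> card (open_nbhd V E v \<inter> layer S b))"
    by (auto simp: less_2_cases_iff)
  finally show ?thesis
    using assms layer_subset[OF assms] unfolding is_kTDS_def by blast
qed

lemma is_minimal_kTDS_cross_K2_iff:
  assumes S: "S \<subseteq> V \<times> {0..<2}"
  shows "is_minimal_kTDS k (V \<times> {0..<2}) (cross_adj E K_adj) S
           \<longleftrightarrow> (\<forall>b<2. is_minimal_kTDS k V E (layer S b))"
proof
  assume min: "is_minimal_kTDS k (V \<times> {0..<2}) (cross_adj E K_adj) S"
  show "\<forall>b<2. is_minimal_kTDS k V E (layer S b)"
  proof (intro allI impI)
    fix b :: nat assume "b < 2"
    have "\<not> is_kTDS k V E X" if X: "X \<subset> layer S b" for X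
    proof
      assume X_kTDS: "is_kTDS k V E X"
      define T where "T = S - (layer S b - X) \<times> {b}"
      have T_sub: "T \<subseteq> V \<times> {0..<2}" using S unfolding T_def by auto
      have "layer T c = (if c = b then X else layer S c)" for c
        using X unfolding T_def layer_def by auto
      then have "is_kTDS k (V \<times> {0..<2}) (cross_adj E K_adj) T"
        using min X_kTDS unfolding is_kTDS_cross_K2_iff[OF T_sub] is_minimal_kTDS_def
          is_kTDS_cross_K2_iff[OF S] by simp
      moreover have "T \<subset> S" using X unfolding T_def layer_def by auto
      ultimately show False using min unfolding is_minimal_kTDS_def by blast
    qed
    then show "is_minimal_kTDS k V E (layer S b)"
      using min \<open>b < 2\<close> unfolding is_minimal_kTDS_def is_kTDS_cross_K2_iff[OF S] by blast
  qed
next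
  assume min: "\<forall>b<2. is_minimal_kTDS k V E (layer S b)"
  have "\<not> is_kTDS k (V \<times> {0..<2}) (cross_adj E K_adj) T" if T_psub: "T \<subset> S" for T
  proof
    assume T_kTDS: "is_kTDS k (V \<times> {0..<2}) (cross_adj E K_adj) T"
    obtain u c where uc: "(u, c) \<in> S - T" using T_psub by auto
    then have "c < 2" using S by auto
    have "layer T c \<subset> layer S c" using T_psub uc unfolding layer_def by auto
    moreover have "is_kTDS k V E (layer T c)"
      using T_kTDS \<open>c < 2\<close> T_psub S is_kTDS_cross_K2_iff[of T] by auto
    ultimately show False using min \<open>c < 2\<close> unfolding is_minimal_kTDS_def by blast
  qed
  then show "is_minimal_kTDS k (V \<times> {0..<2}) (cross_adj E K_adj) S"
    using min unfolding is_minimal_kTDS_def is_kTDS_cross_K2_iff[OF S] by blast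
qed

lemma card_eq_layer_sum:
  assumes "S \<subseteq> V \<times> {0..<2}" and "finite V"
  shows "card S = card (layer S 0) + card (layer S 1)"
proof -
  have fin: "finite (layer S b)" for b
    using finite_subset[OF layer_subset[OF assms(1)] assms(2)] .
  have "S = (\<lambda>u. (u, 0)) ` layer S 0 \<union> (\<lambda>u. (u, 1)) ` layer S 1"
    using assms(1) unfolding layer_def by (force simp: image_iff less_2_cases_iff)
  also have "card \<dots> = card (layer S 0) + card (layer S 1)"
    by (subst card_Un_disjoint) (auto simp: fin card_image inj_on_def)
  finally show ?thesis .
qed

lemma open_nbhd_complete_Int:
  "X \<subseteq> V \<Longrightarrow> open_nbhd V K_adj v \<inter> X = X - {v}"
  unfolding open_nbhd_def K_adj_def by auto

lemma is_kTDS_complete_iff: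
  assumes "X \<subseteq> V" and "V \<noteq> {}" and "1 \<le> k"
  shows "is_kTDS k V K_adj X \<longleftrightarrow> k < card X"
proof
  assume "is_kTDS k V K_adj X"
  then have dom: "k \<le> card (X - {v})" if "v \<in> V" for v
    using that assms(1) unfolding is_kTDS_def open_nbhd_complete_Int[OF assms(1)] by blast
  show "k < card X"
  proof (cases "X = {}")
    case True
    then show ?thesis using dom assms(2,3) by auto
  next
    case False
    then obtain v where "v \<in> X" by auto
    then have "k \<le> card X - 1" using dom assms(1) card_Diff_singleton by fastforce
    then show ?thesis using assms(3) by linarith
  qed
next
  assume "k < card X"
  have "k \<le> card (X - {v})" for v
  proof -
    have "card X - 1 \<le> card (X - {v})"
      by (cases "v \<in> X") (simp_all add: card_Diff_singleton)
    with \<open>k < card X\<close> show ?thesis by linarith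
  qed
  then show "is_kTDS k V K_adj X"
    using assms(1) unfolding is_kTDS_def open_nbhd_complete_Int[OF assms(1)] by blast
qed

lemma is_minimal_kTDS_complete_iff:
  assumes "V \<noteq> {}" and "1 \<le> k"
  shows "is_minimal_kTDS k V K_adj X \<longleftrightarrow> X \<subseteq> V \<and> card X = k + 1"
proof
  assume min: "is_minimal_kTDS k V K_adj X"
  then have X: "X \<subseteq> V" and "k < card X"
    using is_kTDS_complete_iff[OF _ assms] unfolding is_minimal_kTDS_def is_kTDS_def by blast+
  then obtain v where "v \<in> X" by fastforce
  have "\<not> k < card (X - {v})"
    using min X \<open>v \<in> X\<close> is_kTDS_complete_iff[of "X - {v}", OF _ assms]
    unfolding is_minimal_kTDS_def by blast
  with \<open>v \<in> X\<close> \<open>k < card X\<close> show "X \<subseteq> V \<and> card X = k + 1"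
    using X card_Diff_singleton by fastforce
next
  assume X: "X \<subseteq> V \<and> card X = k + 1"
  then have "finite X" by (simp add: card_ge_0_finite)
  have "\<not> is_kTDS k V K_adj T" if "T \<subset> X" for T
    using that X psubset_card_mono[OF \<open>finite X\<close> that] is_kTDS_complete_iff[of T, OF _ assms]
    by auto
  then show "is_minimal_kTDS k V K_adj X"
    using X is_kTDS_complete_iff[OF _ assms] unfolding is_minimal_kTDS_def by auto
qed

theorem mainTheorem15:
  fixes n k :: nat
  assumes "1 \<le> k" and "k \<le> n - 1"
  shows "upper_ktuple_tdom k (cross_verts (K_verts n) (K_verts 2)) (cross_adj K_adj K_adj) = 2 * k + 2"
proof -
  have Kn: "{0..<n} \<noteq> {}" using assms by auto
  have minimal_iff: "is_minimal_kTDS k ({0..<n} \<times> {0..<2}) (cross_adj K_adj K_adj) S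
      \<longleftrightarrow> S \<subseteq> {0..<n} \<times> {0..<2} \<and> (\<forall>b<2. card (layer S b) = k + 1)" for S
  proof (cases "S \<subseteq> {0..<n} \<times> {0..<2}")
    case True
    then show ?thesis
      using is_minimal_kTDS_cross_K2_iff[OF True] is_minimal_kTDS_complete_iff[OF Kn assms(1)]
        layer_subset[OF True] by simp
  next
    case False
    then show ?thesis unfolding is_minimal_kTDS_def is_kTDS_def by blast
  qed
  have "card S = 2 * k + 2"
    if "is_minimal_kTDS k ({0..<n} \<times> {0..<2}) (cross_adj K_adj K_adj) S" for S
    using that card_eq_layer_sum[of S "{0..<n}"] unfolding minimal_iff by simp
  moreover have "is_minimal_kTDS k ({0..<n} \<times> {0..<2}) (cross_adj K_adj K_adj) ({0..<k + 1} \<times> {0..<2})"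
    using assms unfolding minimal_iff layer_def by auto
  moreover have "card ({0..<k + 1} \<times> {0..<2::nat}) = 2 * k + 2"
    by (simp add: card_cartesian_product)
  ultimately have "{card S | S. is_minimal_kTDS k ({0..<n} \<times> {0..<2}) (cross_adj K_adj K_adj) S} = {2 * k + 2}"
    by (auto; metis)
  then show ?thesis
    unfolding upper_ktuple_tdom_def cross_verts_def K_verts_def by simp
qed

end
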